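(* Let $U>0$, $T\ge0$, $\mu\ge0$, and let $(\gamma,\alpha,\rho_0)$ be a minimizer of $\mathcal{F}$ over $\mathcal{D}$. If $\rho_0=0$ then $\|\gamma\|_{L^1}\ge \mu/(2U)$; if $\rho_0>0$ then $\|\gamma\|_{L^1}\le\mu/(2U)$. Furthermore, if $\mu\le0$, no minimizer has $\rho_0>0$.
   Context: Let $\mathbb{T}^3=[-\pi,\pi]^3$ with periodic identification and normalized Haar measure $dp$. Let $\varepsilon(p)=4\sum_{k=1}^3\sin^2(p_k/2)$. $\mathcal{D}=\{(\gamma,\alpha,\rho_0): \gamma\in L^1(\mathbb{T}^3),\ \gamma\ge0,\ \alpha^2\le\gamma(1+\gamma)\text{ a.e.},\ \rho_0\ge0\}$. With $\beta=\sqrt{(\tfrac12+\gamma)^2-\alpha^2}$, $S(\gamma,\alpha)=\int\big[(\beta+\tfrac12)\ln(\beta+\tfrac12)-(\beta-\tfrac12)\ln(\beta-\tfrac12)\big]dp$, and $\mathcal{F}(\gamma,\alpha,\rho_0)=\int(\varepsilon-\mu)\gamma\,dp-\mu\rho_0-TS(\gamma,\alpha)+\frac U2(\int\alpha)^2+U(\int\gamma)^2+U\rho_0\int\alpha+2U\rho_0\int\gamma+\frac U2\rho_0^2$ (integrals over $\mathbb{T}^3$; entropy term absent at $T=0$). A minimizer is a point of $\mathcal{D}$ attaining $\inf_{\mathcal{D}}\mathcal{F}$. *)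

theory Defs
  imports "HOL-Analysis.Analysis"
begin

text \<open>The torus T^3 = [-pi,pi]^3 (periodic identification is irrelevant for integration).\<close>
definition torus :: "(real^3) set" where
  "torus = {p. \<forall>k. - pi \<le> p $ k \<and> p $ k \<le> pi}"

definition tint :: "(real^3 \<Rightarrow> real) \<Rightarrow> real" where
  "tint f = (LINT p:torus|lebesgue. f p) / (2 * pi) ^ 3"

definition disp :: "real^3 \<Rightarrow> real" where
  "disp p = 4 * (\<Sum>k\<in>UNIV. (sin (p $ k / 2))\<^sup>2)"

definition in_D :: "(real^3 \<Rightarrow> real) \<Rightarrow> (real^3 \<Rightarrow> real) \<Rightarrow> real \<Rightarrow> bool" where
  "in_D \<gamma> \<alpha> \<rho>0 \<longleftrightarrow>
     set_integrable lebesgue torus \<gamma> \<and>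
     set_borel_measurable lebesgue torus \<alpha> \<and>
     (AE p in lebesgue. p \<in> torus \<longrightarrow> 0 \<le> \<gamma> p \<and> (\<alpha> p)\<^sup>2 \<le> \<gamma> p * (1 + \<gamma> p)) \<and>
     0 \<le> \<rho>0"

definition xlnx :: "real \<Rightarrow> real" where
  "xlnx x = (if x \<le> 0 then 0 else x * ln x)"

definition beta :: "(real^3 \<Rightarrow> real) \<Rightarrow> (real^3 \<Rightarrow> real) \<Rightarrow> real^3 \<Rightarrow> real" where
  "beta \<gamma> \<alpha> p = sqrt ((1/2 + \<gamma> p)\<^sup>2 - (\<alpha> p)\<^sup>2)"

definition entropy :: "(real^3 \<Rightarrow> real) \<Rightarrow> (real^3 \<Rightarrow> real) \<Rightarrow> real" where
  "entropy \<gamma> \<alpha> = tint (\<lambda>p. xlnx (beta \<gamma> \<alpha> p + 1/2) - xlnx (beta \<gamma> \<alpha> p - 1/2))"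

definition freeF :: "real \<Rightarrow> real \<Rightarrow> real \<Rightarrow> (real^3 \<Rightarrow> real) \<Rightarrow> (real^3 \<Rightarrow> real) \<Rightarrow> real \<Rightarrow> real" where
  "freeF T \<mu> U \<gamma> \<alpha> \<rho>0 =
     tint (\<lambda>p. (disp p - \<mu>) * \<gamma> p) - \<mu> * \<rho>0 - T * entropy \<gamma> \<alpha>
     + U / 2 * (tint \<alpha>)\<^sup>2 + U * (tint \<gamma>)\<^sup>2 + U * \<rho>0 * tint \<alpha>
     + 2 * U * \<rho>0 * tint \<gamma> + U / 2 * \<rho>0\<^sup>2"

definition is_minimizer :: "real \<Rightarrow> real \<Rightarrow> real \<Rightarrow> (real^3 \<Rightarrow> real) \<Rightarrow> (real^3 \<Rightarrow> real) \<Rightarrow> real \<Rightarrow> bool" where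
  "is_minimizer T \<mu> U \<gamma> \<alpha> \<rho>0 \<longleftrightarrow>
     in_D \<gamma> \<alpha> \<rho>0 \<and>
     (\<forall>g a r. in_D g a r \<longrightarrow> freeF T \<mu> U \<gamma> \<alpha> \<rho>0 \<le> freeF T \<mu> U g a r)"

end

theory Submission
  imports Defs
begin

text \<open>
  Replacing \<open>\<alpha>\<close> by \<open>0\<close> keeps a competitor in \<open>\<D>\<close> and can only increase the entropy: \<open>\<beta>\<close> grows
  as \<open>|\<alpha>|\<close> shrinks, and \<open>b \<mapsto> (b + 1/2) ln (b + 1/2) - (b - 1/2) ln (b - 1/2)\<close> is increasing.
  With \<open>G = \<integral>\<gamma>\<close>, \<open>A = \<integral>\<alpha>\<close> and \<open>c = 2 U G - \<mu>\<close>, the part of \<open>\<F>\<close> depending on \<open>\<rho>\<^sub>0\<close> and \<open>\<integral>\<alpha>\<close> is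
  \<open>U/2 (A + \<rho>\<^sub>0)\<^sup>2 + c \<rho>\<^sub>0\<close>, so a minimizer satisfies \<open>U/2 (A + \<rho>\<^sub>0)\<^sup>2 + c \<rho>\<^sub>0 \<le> U/2 r\<^sup>2 + c r\<close>
  for all \<open>r \<ge> 0\<close>. If \<open>\<rho>\<^sub>0 = 0\<close>, the choice \<open>r = -c/U\<close> shows \<open>c \<ge> 0\<close>; if \<open>\<rho>\<^sub>0 > 0\<close>, the choice
  \<open>r = 0\<close> shows \<open>c \<le> 0\<close>. When moreover \<open>\<mu> \<le> 0\<close>, this forces \<open>G = 0\<close>, hence \<open>\<alpha> = 0\<close> a.e., and
  then \<open>U/2 \<rho>\<^sub>0\<^sup>2 \<le> \<mu> \<rho>\<^sub>0 \<le> 0\<close>, a contradiction.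
\<close>

lemma torus_eq_cbox: "torus = cbox (\<chi> _. - pi) (\<chi> _. pi)"
  unfolding torus_def interval_cbox_cart[symmetric] by (auto simp: less_eq_vec_def)

lemma set_integrable_const_torus: "set_integrable lebesgue torus (\<lambda>_. c :: real)"
proof -
  have "torus \<in> sets lebesgue" "emeasure lebesgue torus < \<infinity>"
    unfolding torus_eq_cbox using emeasure_lborel_cbox_finite by simp_all
  then show ?thesis
    unfolding set_integrable_def by simp
qed

lemma tint_cong_AE:
  assumes "set_borel_measurable lebesgue torus f" "set_borel_measurable lebesgue torus g"
    and "AE p \<in> torus in lebesgue. f p = g p"
  shows "tint f = tint g"
proof -
  have "(LINT p:torus|lebesgue. f p) = (LINT p:torus|lebesgue. g p)"
    unfolding set_lebesgue_integral_def
    using assms unfolding set_borel_measurable_def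
    by (intro integral_cong_AE) (auto elim!: eventually_mono simp: indicator_def)
  then show ?thesis
    unfolding tint_def by simp
qed

lemma tint_nonneg:
  assumes "AE p \<in> torus in lebesgue. 0 \<le> f p"
  shows "0 \<le> tint f"
proof -
  have "0 \<le> integral\<^sup>L lebesgue (\<lambda>p. indicator torus p * f p)"
    using assms by (auto intro!: integral_nonneg_AE elim!: eventually_mono simp: indicator_def)
  then show ?thesis
    unfolding tint_def set_lebesgue_integral_def by simp
qed

lemma tint_eq_0_imp_AE_zero:
  assumes "set_integrable lebesgue torus f" "AE p \<in> torus in lebesgue. 0 \<le> f p" "tint f = 0"
  shows "AE p \<in> torus in lebesgue. f p = 0"
proof -
  have "integral\<^sup>L lebesgue (\<lambda>p. indicator torus p * f p) = 0"
    using assms(3) unfolding tint_def set_lebesgue_integral_def by simp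
  then have "AE p in lebesgue. indicator torus p * f p = 0"
    using assms(1,2) unfolding set_integrable_def
    by (subst (asm) integral_nonneg_eq_0_iff_AE) (auto elim!: eventually_mono simp: indicator_def)
  then show ?thesis
    by (auto elim!: eventually_mono simp: indicator_def)
qed

definition entropy_density :: "real \<Rightarrow> real" where
  "entropy_density b = xlnx (b + 1/2) - xlnx (b - 1/2)"

lemma entropy_eq_tint_entropy_density:
  "entropy \<gamma> \<alpha> = tint (\<lambda>p. entropy_density (beta \<gamma> \<alpha> p))"
  unfolding entropy_def entropy_density_def ..

lemma entropy_density_measurable [measurable]: "entropy_density \<in> borel_measurable borel"
  unfolding entropy_density_def xlnx_def by measurable

lemma entropy_density_half: "entropy_density (1/2) = 0"
  by (simp add: entropy_density_def xlnx_def)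

lemma entropy_density_eq:
  assumes "c > 0"
  shows "entropy_density (c + 1/2) = (c + 1) * ln (c + 1) - c * ln c"
  using assms by (simp add: entropy_density_def xlnx_def add.assoc)

lemma entropy_density_nonneg:
  assumes "1/2 \<le> b"
  shows "0 \<le> entropy_density b"
proof (cases "b = 1/2")
  case False
  define c where "c = b - 1/2"
  have c: "c > 0" and b: "b = c + 1/2"
    using assms False by (auto simp: c_def)
  have "c * ln c \<le> c * ln (c + 1)"
    using c by (intro mult_left_mono) auto
  also have "\<dots> \<le> (c + 1) * ln (c + 1)"
    using c by (intro mult_right_mono) auto
  finally show ?thesis
    unfolding b entropy_density_eq[OF c] by simp
next
  case True
  then show ?thesis
    unfolding True entropy_density_half by simp
qed

lemma entropy_density_le:
  assumes "1/2 \<le> b"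
  shows "entropy_density b \<le> b + 1/2"
proof (cases "b = 1/2")
  case False
  define c where "c = b - 1/2"
  have c: "c > 0" and b: "b = c + 1/2"
    using assms False by (auto simp: c_def)
  have "c * (ln (c + 1) - ln c) = c * ln ((c + 1) / c)"
    using c by (simp add: ln_div)
  also have "\<dots> \<le> c * ((c + 1) / c - 1)"
    using c by (intro mult_left_mono ln_le_minus_one) auto
  also have "\<dots> = 1"
    using c by (simp add: field_simps)
  finally have "c * (ln (c + 1) - ln c) \<le> 1" .
  moreover have "ln (c + 1) \<le> c"
    using ln_le_minus_one[of "c + 1"] c by simp
  ultimately show ?thesis
    unfolding b entropy_density_eq[OF c] by (simp add: algebra_simps)
next
  case True
  then show ?thesis
    unfolding True entropy_density_half by simp
qed

lemma xlnx_has_real_derivative: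
  assumes "y > 0"
  shows "(xlnx has_real_derivative ln y + 1) (at y)"
proof -
  have "eventually (\<lambda>x. xlnx x = x * ln x) (nhds y)"
    using eventually_nhds_in_open[of "{0<..}" y] assms
    by (auto elim!: eventually_mono simp: xlnx_def)
  moreover have "((\<lambda>x. x * ln x) has_real_derivative ln y + 1) (at y)"
    using assms by (auto intro!: derivative_eq_intros)
  ultimately show ?thesis
    by (subst DERIV_cong_ev[OF refl _ refl])
qed

lemma entropy_density_has_real_derivative:
  assumes "b > 1/2"
  shows "(entropy_density has_real_derivative ln (b + 1/2) - ln (b - 1/2)) (at b)"
proof -
  have "((\<lambda>b. xlnx (b + 1/2) - xlnx (b - 1/2)) has_real_derivative
      (ln (b + 1/2) + 1) * 1 - (ln (b - 1/2) + 1) * 1) (at b)"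
    using assms
    by (intro DERIV_diff DERIV_chain2[OF xlnx_has_real_derivative]) (auto intro!: derivative_eq_intros)
  then show ?thesis
    unfolding entropy_density_def[abs_def] by simp
qed

lemma entropy_density_mono:
  assumes "1/2 \<le> a" "a \<le> b"
  shows "entropy_density a \<le> entropy_density b"
proof (cases "a = 1/2")
  case True
  then show ?thesis
    using entropy_density_nonneg[of b] assms unfolding True entropy_density_half by simp
next
  case False
  then have a: "a > 1/2"
    using assms by auto
  show ?thesis
  proof (rule DERIV_nonneg_imp_increasing_open[OF assms(2)])
    fix x
    assume "a < x" "x < b"
    then have x: "x > 1/2"
      using a by simp
    have "0 \<le> ln (x + 1/2) - ln (x - 1/2)"
      using x by simp
    then show "\<exists>y. (entropy_density has_real_derivative y) (at x) \<and> 0 \<le> y"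
      using entropy_density_has_real_derivative[OF x] by blast
  next
    show "continuous_on {a..b} entropy_density"
    proof (intro continuous_at_imp_continuous_on ballI)
      fix x
      assume "x \<in> {a..b}"
      then have "x > 1/2"
        using a by simp
      then show "isCont entropy_density x"
        by (rule DERIV_isCont[OF entropy_density_has_real_derivative])
    qed
  qed
qed

lemma beta_bounds:
  assumes "0 \<le> \<gamma> p" "(\<alpha> p)\<^sup>2 \<le> \<gamma> p * (1 + \<gamma> p)"
  shows "1/2 \<le> beta \<gamma> \<alpha> p" "beta \<gamma> \<alpha> p \<le> 1/2 + \<gamma> p"
proof -
  have "sqrt ((1/2)\<^sup>2) \<le> beta \<gamma> \<alpha> p"
    unfolding beta_def using assms by (intro real_sqrt_le_mono) (simp add: power2_eq_square algebra_simps)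
  then show "1/2 \<le> beta \<gamma> \<alpha> p"
    by simp
  have "beta \<gamma> \<alpha> p \<le> sqrt ((1/2 + \<gamma> p)\<^sup>2)"
    unfolding beta_def by (intro real_sqrt_le_mono) simp
  then show "beta \<gamma> \<alpha> p \<le> 1/2 + \<gamma> p"
    using assms(1) by simp
qed

lemma beta_antimono:
  assumes "\<bar>\<alpha>' p\<bar> \<le> \<bar>\<alpha> p\<bar>"
  shows "beta \<gamma> \<alpha> p \<le> beta \<gamma> \<alpha>' p"
proof -
  have "(\<alpha>' p)\<^sup>2 \<le> (\<alpha> p)\<^sup>2"
    using assms by (simp add: abs_le_square_iff)
  then show ?thesis
    unfolding beta_def by (intro real_sqrt_le_mono) simp
qed

lemma in_D_AE_constraint:
  "in_D \<gamma> \<alpha> \<rho>0 \<Longrightarrow> AE p \<in> torus in lebesgue. 0 \<le> \<gamma> p \<and> (\<alpha> p)\<^sup>2 \<le> \<gamma> p * (1 + \<gamma> p)"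
  unfolding in_D_def by simp

lemma in_D_set_borel_measurable:
  assumes "in_D \<gamma> \<alpha> \<rho>0"
  shows "set_borel_measurable lebesgue torus \<gamma>" "set_borel_measurable lebesgue torus \<alpha>"
  using assms unfolding in_D_def set_integrable_def set_borel_measurable_def
  by (auto dest: borel_measurable_integrable)

lemma in_D_zero_pairing:
  assumes "in_D \<gamma> \<alpha> \<rho>0" "0 \<le> r"
  shows "in_D \<gamma> (\<lambda>_. 0) r"
  using assms unfolding in_D_def set_borel_measurable_def
  by (auto elim!: eventually_mono)

lemma set_integrable_entropy_density:
  assumes "in_D \<gamma> \<alpha> \<rho>0"
  shows "set_integrable lebesgue torus (\<lambda>p. entropy_density (beta \<gamma> \<alpha> p))"
proof (rule set_integrable_bound)
  have "set_integrable lebesgue torus \<gamma>"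
    using assms unfolding in_D_def by simp
  then show "set_integrable lebesgue torus (\<lambda>p. 1 + \<gamma> p)"
    using set_integrable_const_torus by (rule set_integral_add(1)[rotated])
  have [measurable]: "(\<lambda>p. indicator torus p * \<gamma> p) \<in> borel_measurable lebesgue"
    "(\<lambda>p. indicator torus p * \<alpha> p) \<in> borel_measurable lebesgue"
    using in_D_set_borel_measurable[OF assms] unfolding set_borel_measurable_def by simp_all
  have "(\<lambda>p. indicator torus p * entropy_density (beta \<gamma> \<alpha> p)) =
      (\<lambda>p. entropy_density (sqrt ((1/2 + indicator torus p * \<gamma> p)\<^sup>2 - (indicator torus p * \<alpha> p)\<^sup>2)))"
    by (auto simp: indicator_def beta_def entropy_density_half)
  then show "set_borel_measurable lebesgue torus (\<lambda>p. entropy_density (beta \<gamma> \<alpha> p))"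
    unfolding set_borel_measurable_def by simp
  show "AE p in lebesgue. p \<in> torus \<longrightarrow>
      norm (entropy_density (beta \<gamma> \<alpha> p)) \<le> norm (1 + \<gamma> p)"
    using in_D_AE_constraint[OF assms]
  proof (elim eventually_mono, intro impI)
    fix p
    assume "p \<in> torus \<longrightarrow> 0 \<le> \<gamma> p \<and> (\<alpha> p)\<^sup>2 \<le> \<gamma> p * (1 + \<gamma> p)" "p \<in> torus"
    then have \<gamma>: "0 \<le> \<gamma> p" and \<beta>: "1/2 \<le> beta \<gamma> \<alpha> p" "beta \<gamma> \<alpha> p \<le> 1/2 + \<gamma> p"
      using beta_bounds by auto
    show "norm (entropy_density (beta \<gamma> \<alpha> p)) \<le> norm (1 + \<gamma> p)"
      using entropy_density_nonneg[OF \<beta>(1)] entropy_density_le[OF \<beta>(1)] \<beta>(2) \<gamma> by simp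
  qed
qed

lemma entropy_antimono:
  assumes "in_D \<gamma> \<alpha> \<rho>0" "in_D \<gamma> \<alpha>' \<rho>0'"
    and "AE p \<in> torus in lebesgue. \<bar>\<alpha>' p\<bar> \<le> \<bar>\<alpha> p\<bar>"
  shows "entropy \<gamma> \<alpha> \<le> entropy \<gamma> \<alpha>'"
proof -
  have "AE p \<in> torus in lebesgue.
      entropy_density (beta \<gamma> \<alpha> p) \<le> entropy_density (beta \<gamma> \<alpha>' p)"
    using in_D_AE_constraint[OF assms(1)] assms(3)
  proof eventually_elim
    case (elim p)
    show ?case
    proof
      assume "p \<in> torus"
      with elim have "1/2 \<le> beta \<gamma> \<alpha> p" "beta \<gamma> \<alpha> p \<le> beta \<gamma> \<alpha>' p"
        using beta_bounds beta_antimono by auto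
      then show "entropy_density (beta \<gamma> \<alpha> p) \<le> entropy_density (beta \<gamma> \<alpha>' p)"
        by (rule entropy_density_mono)
    qed
  qed
  then have "(LINT p:torus|lebesgue. entropy_density (beta \<gamma> \<alpha> p))
      \<le> (LINT p:torus|lebesgue. entropy_density (beta \<gamma> \<alpha>' p))"
    using assms(1,2) by (intro set_integral_mono_AE set_integrable_entropy_density)
  then show ?thesis
    unfolding entropy_eq_tint_entropy_density tint_def by (simp add: divide_right_mono)
qed

lemma tint_abs_eq:
  assumes "in_D \<gamma> \<alpha> \<rho>0"
  shows "tint (\<lambda>p. \<bar>\<gamma> p\<bar>) = tint \<gamma>"
proof (rule tint_cong_AE)
  have "(\<lambda>p. \<bar>indicator torus p * \<gamma> p\<bar>) \<in> borel_measurable lebesgue"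
    using in_D_set_borel_measurable(1)[OF assms] unfolding set_borel_measurable_def by simp
  then show "set_borel_measurable lebesgue torus (\<lambda>p. \<bar>\<gamma> p\<bar>)"
    unfolding set_borel_measurable_def by (simp add: abs_mult)
  show "set_borel_measurable lebesgue torus \<gamma>"
    using in_D_set_borel_measurable(1)[OF assms] .
  show "AE p \<in> torus in lebesgue. \<bar>\<gamma> p\<bar> = \<gamma> p"
    using in_D_AE_constraint[OF assms] by (auto elim!: eventually_mono)
qed

lemma tint_density_nonneg: "in_D \<gamma> \<alpha> \<rho>0 \<Longrightarrow> 0 \<le> tint \<gamma>"
  by (rule tint_nonneg, drule in_D_AE_constraint) (auto elim!: eventually_mono)

lemma tint_pairing_eq_0_if_tint_density_eq_0:
  assumes "in_D \<gamma> \<alpha> \<rho>0" "tint \<gamma> = 0"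
  shows "tint \<alpha> = 0"
proof -
  have "AE p \<in> torus in lebesgue. \<gamma> p = 0"
    using assms in_D_AE_constraint[OF assms(1)] unfolding in_D_def
    by (intro tint_eq_0_imp_AE_zero) (auto elim!: eventually_mono)
  then have "AE p \<in> torus in lebesgue. \<alpha> p = 0"
    using in_D_AE_constraint[OF assms(1)] by eventually_elim auto
  then have "tint \<alpha> = tint (\<lambda>_. 0)"
    using in_D_set_borel_measurable(2)[OF assms(1)]
    by (intro tint_cong_AE) (auto simp: set_borel_measurable_def)
  then show ?thesis
    by (simp add: tint_def)
qed

lemma freeF_eq_completed_square:
  "freeF T \<mu> U \<gamma> \<alpha> \<rho>0 =
     tint (\<lambda>p. (disp p - \<mu>) * \<gamma> p) + U * (tint \<gamma>)\<^sup>2 - T * entropy \<gamma> \<alpha>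
     + U / 2 * (tint \<alpha> + \<rho>0)\<^sup>2 + (2 * U * tint \<gamma> - \<mu>) * \<rho>0"
  unfolding freeF_def by (simp add: power2_eq_square algebra_simps)

lemma minimizer_reduced_inequality:
  assumes "is_minimizer T \<mu> U \<gamma> \<alpha> \<rho>0" "T \<ge> 0" "r \<ge> 0"
  shows "U / 2 * (tint \<alpha> + \<rho>0)\<^sup>2 + (2 * U * tint \<gamma> - \<mu>) * \<rho>0
    \<le> U / 2 * r\<^sup>2 + (2 * U * tint \<gamma> - \<mu>) * r"
proof -
  have D: "in_D \<gamma> \<alpha> \<rho>0" and D0: "in_D \<gamma> (\<lambda>_. 0) r"
    using assms in_D_zero_pairing unfolding is_minimizer_def by auto
  have "freeF T \<mu> U \<gamma> \<alpha> \<rho>0 \<le> freeF T \<mu> U \<gamma> (\<lambda>_. 0) r"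
    using assms(1) D0 unfolding is_minimizer_def by blast
  moreover have "T * entropy \<gamma> \<alpha> \<le> T * entropy \<gamma> (\<lambda>_. 0)"
    using entropy_antimono[OF D D0] assms(2) by (auto intro: mult_left_mono)
  moreover have "tint (\<lambda>_. 0) = 0"
    by (simp add: tint_def)
  ultimately show ?thesis
    unfolding freeF_eq_completed_square by simp
qed

lemma linear_coeff_nonneg_if_nonneg_below_quadratic:
  fixes U c m :: real
  assumes "U > 0" "0 \<le> m" "\<And>r. r \<ge> 0 \<Longrightarrow> m \<le> U / 2 * r\<^sup>2 + c * r"
  shows "0 \<le> c"
proof (rule ccontr)
  assume "\<not> 0 \<le> c"
  then have "m \<le> U / 2 * (- c / U)\<^sup>2 + c * (- c / U)"
    using assms(1) by (intro assms(3)) (simp add: field_simps)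
  also have "\<dots> = - c\<^sup>2 / (2 * U)"
    using assms(1) by (simp add: field_simps power2_eq_square)
  also have "\<dots> < 0"
    using assms(1) \<open>\<not> 0 \<le> c\<close> by simp
  finally show False
    using assms(2) by simp
qed

lemma minimizer_density_lower_bound:
  assumes "is_minimizer T \<mu> U \<gamma> \<alpha> \<rho>0" "U > 0" "T \<ge> 0" "\<rho>0 = 0"
  shows "\<mu> \<le> 2 * U * tint \<gamma>"
proof -
  have "0 \<le> 2 * U * tint \<gamma> - \<mu>"
  proof (rule linear_coeff_nonneg_if_nonneg_below_quadratic[OF assms(2)])
    show "0 \<le> U / 2 * (tint \<alpha>)\<^sup>2"
      using assms(2) by simp
    show "U / 2 * (tint \<alpha>)\<^sup>2 \<le> U / 2 * r\<^sup>2 + (2 * U * tint \<gamma> - \<mu>) * r" if "r \<ge> 0" for r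
      using minimizer_reduced_inequality[OF assms(1,3) that] assms(4) by simp
  qed
  then show ?thesis
    by simp
qed

lemma minimizer_density_upper_bound:
  assumes "is_minimizer T \<mu> U \<gamma> \<alpha> \<rho>0" "U \<ge> 0" "T \<ge> 0" "\<rho>0 > 0"
  shows "2 * U * tint \<gamma> \<le> \<mu>"
proof -
  have "0 \<le> U / 2 * (tint \<alpha> + \<rho>0)\<^sup>2"
    using assms(2) by simp
  then have "(2 * U * tint \<gamma> - \<mu>) * \<rho>0 \<le> 0"
    using minimizer_reduced_inequality[OF assms(1,3), of 0] by simp
  then show ?thesis
    using assms(4) by (simp add: mult_le_0_iff)
qed

lemma minimizer_no_condensate_if_nonpos_chemical_potential:
  assumes "is_minimizer T \<mu> U \<gamma> \<alpha> \<rho>0" "U > 0" "T \<ge> 0" "\<mu> \<le> 0"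
  shows "\<rho>0 = 0"
proof (rule ccontr)
  have D: "in_D \<gamma> \<alpha> \<rho>0"
    using assms(1) unfolding is_minimizer_def by simp
  assume "\<rho>0 \<noteq> 0"
  with D have \<rho>0: "\<rho>0 > 0"
    unfolding in_D_def by simp
  have "U * tint \<gamma> \<le> 0"
    using minimizer_density_upper_bound[OF assms(1) _ assms(3) \<rho>0] assms(2,4) by simp
  then have "tint \<gamma> = 0"
    using tint_density_nonneg[OF D] assms(2) by (simp add: mult_le_0_iff)
  moreover from this have "tint \<alpha> = 0"
    by (rule tint_pairing_eq_0_if_tint_density_eq_0[OF D])
  ultimately have "U / 2 * \<rho>0\<^sup>2 \<le> \<mu> * \<rho>0"
    using minimizer_reduced_inequality[OF assms(1,3), of 0] by simp
  moreover have "\<mu> * \<rho>0 \<le> 0"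
    using \<rho>0 assms(4) by (simp add: mult_nonpos_nonneg)
  moreover have "0 < U / 2 * \<rho>0\<^sup>2"
    using \<rho>0 assms(2) by simp
  ultimately show False
    by linarith
qed

theorem corollary4p2:
  fixes T \<mu> U \<rho>0 :: real and \<gamma> \<alpha> :: "real^3 \<Rightarrow> real"
  assumes "U > 0" and "T \<ge> 0"
    and "is_minimizer T \<mu> U \<gamma> \<alpha> \<rho>0"
  shows "(\<mu> \<ge> 0 \<longrightarrow>
            (\<rho>0 = 0 \<longrightarrow> tint (\<lambda>p. \<bar>\<gamma> p\<bar>) \<ge> \<mu> / (2 * U)) \<and>
            (\<rho>0 > 0 \<longrightarrow> tint (\<lambda>p. \<bar>\<gamma> p\<bar>) \<le> \<mu> / (2 * U)))
         \<and> (\<mu> \<le> 0 \<longrightarrow> \<rho>0 = 0)"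
proof -
  have abs_eq: "tint (\<lambda>p. \<bar>\<gamma> p\<bar>) = tint \<gamma>"
    using assms(3) tint_abs_eq unfolding is_minimizer_def by blast
  have "\<mu> / (2 * U) \<le> tint \<gamma>" if "\<rho>0 = 0"
    using minimizer_density_lower_bound[OF assms(3,1,2) that] assms(1)
    by (simp add: pos_divide_le_eq algebra_simps)
  moreover have "tint \<gamma> \<le> \<mu> / (2 * U)" if "\<rho>0 > 0"
    using minimizer_density_upper_bound[OF assms(3) _ assms(2) that] assms(1)
    by (simp add: pos_le_divide_eq algebra_simps)
  moreover have "\<rho>0 = 0" if "\<mu> \<le> 0"
    using minimizer_no_condensate_if_nonpos_chemical_potential[OF assms(3,1,2) that] .
  ultimately show ?thesis
    unfolding abs_eq by simp
qed

end
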